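(* Let $F:\mathbb{N}\to\mathbb{R}$ be a function such that (a) $F$ is weakly monotonically increasing; (b) $F(q)\to\infty$ as $q\to\infty$; and (c) $q/F(q)\to\infty$ as $q\to\infty$. For each natural number $q$, let $Z_F(q)$ be the number of positive divisors $d$ of $q$ with $d<\sqrt{F(q)}$, minus the number of positive divisors $d$ of $q$ with $\sqrt{F(q)}\le d< F(q)$. Then $$\lim_{B\to\infty}\frac{1}{B}\sum_{q=1}^{B} Z_F(q)=\gamma .$$
   Context: $\gamma$ denotes the Euler–Mascheroni constant, $\gamma=\lim_{n\to\infty}\left(\sum_{k=1}^n \frac1k-\ln n\right)$. $\mathbb{N}=\{1,2,3,\dots\}$. *)

theory Defs
  imports "HOL-Analysis.Analysis"
begin

definition Z :: "(nat \<Rightarrow> real) \<Rightarrow> nat \<Rightarrow> int" where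
  "Z F q = int (card {d::nat. d > 0 \<and> d dvd q \<and> real d < sqrt (F q)})
         - int (card {d::nat. d > 0 \<and> d dvd q \<and> sqrt (F q) \<le> real d \<and> real d < F q})"

end

theory Submission
  imports Defs
begin

text \<open>
  Write \<open>N\<^sub>y(q)\<close> for the number of divisors of \<open>q\<close> below \<open>y\<close> and \<open>H(y) = \<Sum>\<^bsub>d<y\<^esub> 1/d\<close>,
  so that \<open>Z\<^sub>F(q) = 2 N\<^bsub>\<surd>F(q)\<^esub>(q) - N\<^bsub>F(q)\<^esub>(q)\<close>. Exchanging the order of summation, for any \<open>T\<close>
  \<open>\<Sum>\<^bsub>q\<le>B\<^esub> (N\<^bsub>T(q)\<^esub>(q) - H(T(q)))\<close> becomes a sum over \<open>d < T(B)\<close> of the discrepancies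
  \<open>\<Sum> (1\<^bsub>d|q\<^esub> - 1/d)\<close> of the multiples of \<open>d\<close>, taken over the range of those \<open>q \<le> B\<close> with
  \<open>d < T(q)\<close>. For monotone \<open>T\<close> this range is an interval, so each discrepancy is at most \<open>1\<close>
  and the total error is at most \<open>T(B) = o(B)\<close>. What remains is the Cesaro mean of
  \<open>2 H(\<surd>F(q)) - H(F(q))\<close>, which tends to \<open>2 (ln \<surd>y + \<gamma>) - (ln y + \<gamma>) = \<gamma>\<close>.
\<close>

lemma sum_of_bool_dvd: "(\<Sum>q=1..n. of_bool (d dvd q) :: real) = real (n div d)"
  by (induction n) (simp_all add: div_Suc dvd_eq_mod_eq_0)

lemma dvd_discrepancy_bounds:
  fixes d n :: nat
  shows "-1 < real (n div d) - real n / real d" and "real (n div d) - real n / real d \<le> 0"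
  using floor_correct[of "real n / real d"] by (simp_all add: floor_divide_of_nat_eq)

lemma abs_sum_dvd_discrepancy_le_1:
  fixes d m n :: nat
  shows "\<bar>\<Sum>q\<in>{m<..n}. of_bool (d dvd q) - 1 / real d\<bar> \<le> 1"
proof (cases "m \<le> n")
  case True
  have discrepancy: "(\<Sum>q=1..k. of_bool (d dvd q) - 1 / real d) = real (k div d) - real k / real d"
    for k by (simp only: sum_subtractf sum_of_bool_dvd) simp
  have "{1..n} = {1..m} \<union> {m<..n}" using True by auto
  then have "(\<Sum>q=1..n. of_bool (d dvd q) - 1 / real d)
      = (\<Sum>q=1..m. of_bool (d dvd q) - 1 / real d) + (\<Sum>q\<in>{m<..n}. of_bool (d dvd q) - 1 / real d)"
    by (simp only:) (rule sum.union_disjoint; auto)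
  then have "(\<Sum>q\<in>{m<..n}. of_bool (d dvd q) - 1 / real d)
      = (real (n div d) - real n / real d) - (real (m div d) - real m / real d)"
    unfolding discrepancy by simp
  then show ?thesis using dvd_discrepancy_bounds[of n d] dvd_discrepancy_bounds[of m d] by linarith
qed simp

lemma upward_closed_eq_greaterThanAtMost:
  fixes P :: "nat \<Rightarrow> bool"
  assumes up: "\<And>m n. 1 \<le> m \<Longrightarrow> m \<le> n \<Longrightarrow> P m \<Longrightarrow> P n"
  obtains m where "{q\<in>{1..B}. P q} = {m<..B}"
proof (cases "\<exists>q\<in>{1..B}. P q")
  case False
  show ?thesis by (rule that[of B]) (use False in auto)
next
  case True
  then obtain q\<^sub>0 where q\<^sub>0: "1 \<le> q\<^sub>0" "P q\<^sub>0" by auto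
  define t where "t = (LEAST q. 1 \<le> q \<and> P q)"
  have t: "1 \<le> t \<and> P t" unfolding t_def by (rule LeastI[of _ q\<^sub>0]) (use q\<^sub>0 in auto)
  have "P q \<longleftrightarrow> t \<le> q" if "1 \<le> q" for q
    using that t up[of t q] unfolding t_def by (auto intro: Least_le)
  then have "{q\<in>{1..B}. P q} = {t - 1<..B}" using t by auto
  then show ?thesis by (rule that)
qed

definition num_below :: "real \<Rightarrow> nat" where
  "num_below y = nat \<lceil>y\<rceil> - 1"

lemma less_iff_le_num_below: "1 \<le> d \<Longrightarrow> real d < y \<longleftrightarrow> d \<le> num_below y"
  unfolding num_below_def by (simp add: less_ceiling_iff) linarith

lemma num_below_le: "real (num_below y) \<le> max 0 y"
  unfolding num_below_def using ceiling_correct[of y] by (cases "\<lceil>y\<rceil> \<le> 0") (auto simp: of_nat_diff)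

lemma num_below_ge: "1 \<le> y \<Longrightarrow> y - 1 \<le> real (num_below y)"
  unfolding num_below_def using le_of_int_ceiling[of y] by (subst of_nat_diff) (auto simp: le_nat_iff)

lemma num_below_mono: "y \<le> z \<Longrightarrow> num_below y \<le> num_below z"
  unfolding num_below_def by (intro diff_le_mono nat_mono ceiling_mono)

lemma filterlim_num_below_at_top: "filterlim num_below at_top at_top"
  unfolding filterlim_at_top
proof
  fix n :: nat
  show "eventually (\<lambda>y. n \<le> num_below y) at_top"
    using eventually_ge_at_top[of "real n + 1"]
  proof eventually_elim
    case (elim y)
    then have "real n \<le> real (num_below y)" using num_below_ge[of y] by simp
    then show ?case by simp
  qed
qed

lemma harm_num_below_minus_ln_tendsto:
  "((\<lambda>y. harm (num_below y) - ln y) \<longlongrightarrow> euler_mascheroni) at_top"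
proof -
  have "((\<lambda>y::real. ln (1 - inverse y)) \<longlongrightarrow> ln (1 - 0)) at_top"
    by (intro tendsto_intros tendsto_inverse_0_at_top filterlim_ident) simp
  then have lower: "((\<lambda>y::real. ln (1 - inverse y)) \<longlongrightarrow> 0) at_top" by simp
  have "((\<lambda>y. ln (real (num_below y)) - ln y) \<longlongrightarrow> 0) at_top"
  proof (rule tendsto_sandwich[OF _ _ lower tendsto_const])
    show "eventually (\<lambda>y. ln (1 - inverse y) \<le> ln (real (num_below y)) - ln y) at_top"
      using eventually_ge_at_top[of "2::real"]
    proof eventually_elim
      case (elim y)
      then have "1 - inverse y = (y - 1) / y" by (simp add: field_simps)
      with elim have "ln (1 - inverse y) = ln (y - 1) - ln y" by (simp add: ln_div)
      then show ?case using elim num_below_ge[of y] by simp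
    qed
    show "eventually (\<lambda>y. ln (real (num_below y)) - ln y \<le> 0) at_top"
      using eventually_ge_at_top[of "2::real"]
    proof eventually_elim
      case (elim y)
      then have "0 < real (num_below y)" "real (num_below y) \<le> y"
        using num_below_ge[of y] num_below_le[of y] by auto
      then show ?case by simp
    qed
  qed
  from tendsto_add[OF filterlim_compose[OF euler_mascheroni_LIMSEQ filterlim_num_below_at_top] this]
  show ?thesis by simp
qed

lemma two_harm_sqrt_minus_harm_tendsto:
  "((\<lambda>y. 2 * harm (num_below (sqrt y)) - harm (num_below y) :: real) \<longlongrightarrow> euler_mascheroni) at_top"
proof -
  have "((\<lambda>y. 2 * (harm (num_below (sqrt y)) - ln (sqrt y)) - (harm (num_below y) - ln y))
      \<longlongrightarrow> 2 * euler_mascheroni - euler_mascheroni) at_top"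
    by (intro tendsto_intros harm_num_below_minus_ln_tendsto
          filterlim_compose[OF harm_num_below_minus_ln_tendsto sqrt_at_top])
  moreover have "eventually (\<lambda>y. 2 * (harm (num_below (sqrt y)) - ln (sqrt y)) - (harm (num_below y) - ln y)
      = 2 * harm (num_below (sqrt y)) - harm (num_below y)) at_top"
    using eventually_gt_at_top[of "0::real"] by eventually_elim (simp add: ln_sqrt)
  ultimately have "((\<lambda>y. 2 * harm (num_below (sqrt y)) - harm (num_below y) :: real)
      \<longlongrightarrow> 2 * euler_mascheroni - euler_mascheroni) at_top"
    by (rule Lim_transform_eventually)
  then show ?thesis by simp
qed

definition divisors_below :: "real \<Rightarrow> nat \<Rightarrow> nat set" where
  "divisors_below y q = {d. 0 < d \<and> d dvd q \<and> real d < y}"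

lemma divisors_below_sqrt_subset: "divisors_below (sqrt y) q \<subseteq> divisors_below y q"
proof
  fix d assume "d \<in> divisors_below (sqrt y) q"
  then have d: "0 < d" "d dvd q" "real d < sqrt y" by (auto simp: divisors_below_def)
  then have "real d ^ 2 < sqrt y ^ 2" by (intro power_strict_mono) auto
  moreover have "0 < sqrt y" using d by linarith
  ultimately have "real d ^ 2 < y" by simp
  moreover have "real d \<le> real d ^ 2" using d(1) by (simp add: power2_eq_square)
  ultimately have "real d < y" by linarith
  then show "d \<in> divisors_below y q" using d by (auto simp: divisors_below_def)
qed

lemma finite_divisors_below: "finite (divisors_below y q)"
  by (rule finite_subset[of _ "{..num_below y}"])
     (auto simp: divisors_below_def less_iff_le_num_below)

lemma Z_eq_card_divisors_below:
  "real_of_int (Z F q) = 2 * real (card (divisors_below (sqrt (F q)) q))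
                          - real (card (divisors_below (F q) q))"
proof -
  have "{d. d > 0 \<and> d dvd q \<and> sqrt (F q) \<le> real d \<and> real d < F q}
      = divisors_below (F q) q - divisors_below (sqrt (F q)) q"
    by (auto simp: divisors_below_def)
  then show ?thesis
    using card_mono[OF finite_divisors_below divisors_below_sqrt_subset]
    by (simp add: Z_def card_Diff_subset[OF finite_divisors_below divisors_below_sqrt_subset]
                  of_nat_diff flip: divisors_below_def)
qed

lemma card_divisors_below_minus_harm_eq_sum:
  assumes "num_below y \<le> N"
  shows "real (card (divisors_below y q)) - harm (num_below y)
       = (\<Sum>d=1..N. (of_bool (d dvd q) - 1 / real d) * of_bool (real d < y))"
proof -
  have "divisors_below y q = {1..N} \<inter> {d. d dvd q \<and> real d < y}"
    using assms by (auto simp: divisors_below_def less_iff_le_num_below)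
  then have "real (card (divisors_below y q)) = (\<Sum>d=1..N. of_bool (d dvd q \<and> real d < y))"
    by simp
  moreover have "harm (num_below y) = (\<Sum>d=1..N. of_bool (real d < y) / real d)"
    unfolding harm_def using assms
    by (intro sum.mono_neutral_cong_left) (auto simp: less_iff_le_num_below divide_inverse)
  moreover have "(\<Sum>d=1..N. (of_bool (d dvd q) - 1 / real d) * of_bool (real d < y))
      = (\<Sum>d=1..N. of_bool (d dvd q \<and> real d < y)) - (\<Sum>d=1..N. of_bool (real d < y) / real d)"
    unfolding sum_subtractf[symmetric] by (intro sum.cong) auto
  ultimately show ?thesis by simp
qed

lemma abs_sum_divisors_below_error_le:
  fixes T :: "nat \<Rightarrow> real"
  assumes mono: "\<And>m n. 1 \<le> m \<Longrightarrow> m \<le> n \<Longrightarrow> T m \<le> T n"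
  shows "\<bar>\<Sum>q=1..B. real (card (divisors_below (T q) q)) - harm (num_below (T q))\<bar> \<le> max 0 (T B)"
proof -
  define N where "N = num_below (T B)"
  define e where "e d q = (of_bool (d dvd q) - 1 / real d) * of_bool (real d < T q)" for d q
  have "(\<Sum>q=1..B. real (card (divisors_below (T q) q)) - harm (num_below (T q)))
      = (\<Sum>q=1..B. \<Sum>d=1..N. e d q)"
    unfolding e_def N_def
    by (intro sum.cong refl card_divisors_below_minus_harm_eq_sum num_below_mono mono) auto
  also have "\<dots> = (\<Sum>d=1..N. \<Sum>q=1..B. e d q)" by (rule sum.swap)
  also have "\<bar>\<dots>\<bar> \<le> (\<Sum>d=1..N. \<bar>\<Sum>q=1..B. e d q\<bar>)" by (rule sum_abs)
  also have "\<dots> \<le> (\<Sum>d=1..N. 1)"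
  proof (rule sum_mono)
    fix d assume "d \<in> {1..N}"
    obtain m where m: "{q\<in>{1..B}. real d < T q} = {m<..B}"
      using upward_closed_eq_greaterThanAtMost[of "\<lambda>q. real d < T q"] mono
      by (metis less_le_trans)
    have "(\<Sum>q=1..B. e d q) = (\<Sum>q\<in>{m<..B}. of_bool (d dvd q) - 1 / real d)"
      unfolding e_def m[symmetric] by (simp add: sum.inter_filter) (rule sum.cong; auto)
    then show "\<bar>\<Sum>q=1..B. e d q\<bar> \<le> 1" by (simp add: abs_sum_dvd_discrepancy_le_1)
  qed
  also have "\<dots> \<le> max 0 (T B)" using num_below_le by (simp add: N_def)
  finally show ?thesis .
qed

lemma average_divisors_below_error_tendsto_0:
  fixes T :: "nat \<Rightarrow> real"
  assumes mono: "\<And>m n. 1 \<le> m \<Longrightarrow> m \<le> n \<Longrightarrow> T m \<le> T n"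
    and small: "(\<lambda>B. T B / real B) \<longlonglongrightarrow> 0"
  shows "(\<lambda>B. (\<Sum>q=1..B. real (card (divisors_below (T q) q)) - harm (num_below (T q))) / real B)
           \<longlonglongrightarrow> 0"
proof (rule Lim_null_comparison[OF _ tendsto_rabs_zero[OF small]])
  show "eventually (\<lambda>B. norm ((\<Sum>q=1..B. real (card (divisors_below (T q) q))
                                 - harm (num_below (T q))) / real B) \<le> \<bar>T B / real B\<bar>) sequentially"
    using eventually_gt_at_top[of 0]
  proof eventually_elim
    case (elim B)
    have "\<bar>\<Sum>q=1..B. real (card (divisors_below (T q) q)) - harm (num_below (T q))\<bar> \<le> max 0 (T B)"
      using mono by (rule abs_sum_divisors_below_error_le)
    then have "\<bar>\<Sum>q=1..B. real (card (divisors_below (T q) q)) - harm (num_below (T q))\<bar> \<le> \<bar>T B\<bar>"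
      by linarith
    then show ?case using elim by (simp add: abs_divide divide_right_mono)
  qed
qed

lemma cesaro_mean_tendsto:
  fixes a :: "nat \<Rightarrow> real"
  assumes "a \<longlonglongrightarrow> L"
  shows "(\<lambda>B. (\<Sum>q=1..B. a q) / real B) \<longlonglongrightarrow> L"
proof -
  have "(\<lambda>B. (\<Sum>q=1..B. a q - L) / real B) \<longlonglongrightarrow> 0"
  proof (unfold LIMSEQ_iff, intro allI impI)
    fix \<epsilon> :: real assume "\<epsilon> > 0"
    then obtain M where M: "\<And>q. q \<ge> M \<Longrightarrow> \<bar>a q - L\<bar> < \<epsilon> / 2"
      using assms unfolding LIMSEQ_iff by (metis half_gt_zero real_norm_def)
    define C where "C = (\<Sum>q=1..M. \<bar>a q - L\<bar>)"
    have sum_le: "\<bar>\<Sum>q=1..B. a q - L\<bar> \<le> C + real B * (\<epsilon> / 2)" for B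
    proof -
      have split: "\<bar>\<Sum>q=1..B. a q - L\<bar> \<le> (\<Sum>q=1..B. \<bar>a q - L\<bar> * of_bool (q < M) + \<epsilon> / 2)"
        using M \<open>\<epsilon> > 0\<close> by (intro order.trans[OF sum_abs sum_mono]) (force simp: not_less)
      have "(\<Sum>q=1..B. \<bar>a q - L\<bar> * of_bool (q < M)) = (\<Sum>q\<in>{1..B} \<inter> {q. q < M}. \<bar>a q - L\<bar>)"
        by simp
      also have "\<dots> \<le> C" unfolding C_def by (intro sum_mono2) auto
      finally show ?thesis using split by (simp add: sum.distrib del: sum_mult_of_bool_eq)
    qed
    have "0 \<le> 2 * C / \<epsilon>" using \<open>\<epsilon> > 0\<close> by (simp add: C_def sum_nonneg)
    obtain B\<^sub>0 :: nat where "2 * C / \<epsilon> < B\<^sub>0" using reals_Archimedean2 by blast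
    show "\<exists>B\<^sub>0. \<forall>B\<ge>B\<^sub>0. norm ((\<Sum>q=1..B. a q - L) / real B - 0) < \<epsilon>"
    proof (intro exI allI impI)
      fix B assume "B\<^sub>0 \<le> B"
      then have B: "2 * C / \<epsilon> < B" "0 < real B"
        using \<open>2 * C / \<epsilon> < B\<^sub>0\<close> \<open>0 \<le> 2 * C / \<epsilon>\<close> of_nat_mono[of B\<^sub>0 B] by linarith+
      then have "C < real B * (\<epsilon> / 2)" using \<open>\<epsilon> > 0\<close> by (simp add: field_simps)
      with sum_le[of B] B(2) show "norm ((\<Sum>q=1..B. a q - L) / real B - 0) < \<epsilon>"
        by (simp add: abs_divide field_simps)
    qed
  qed
  then have "(\<lambda>B. (\<Sum>q=1..B. a q - L) / real B + L) \<longlonglongrightarrow> 0 + L" by (rule tendsto_add) simp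
  moreover have "eventually (\<lambda>B. (\<Sum>q=1..B. a q - L) / real B + L = (\<Sum>q=1..B. a q) / real B) sequentially"
    using eventually_gt_at_top[of 0] by eventually_elim (simp add: sum_subtractf field_simps)
  ultimately show ?thesis by (simp add: tendsto_cong)
qed

lemma sqrt_over_real_tendsto_0:
  fixes f :: "nat \<Rightarrow> real"
  assumes "filterlim f at_top sequentially" and "(\<lambda>n. f n / real n) \<longlonglongrightarrow> 0"
  shows "(\<lambda>n. sqrt (f n) / real n) \<longlonglongrightarrow> 0"
proof (rule Lim_null_comparison[OF _ tendsto_rabs_zero[OF assms(2)]])
  show "eventually (\<lambda>n. norm (sqrt (f n) / real n) \<le> \<bar>f n / real n\<bar>) sequentially"
    using filterlim_at_top[THEN iffD1, OF assms(1), rule_format, of 1]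
  proof eventually_elim
    case (elim n)
    then have "sqrt (f n) * 1 \<le> sqrt (f n) * sqrt (f n)" by (intro mult_left_mono) auto
    with elim show ?case by (auto simp: abs_divide intro!: divide_right_mono)
  qed
qed

theorem theorem1:
  fixes F :: "nat \<Rightarrow> real"
  assumes mono: "\<And>m n. 1 \<le> m \<Longrightarrow> m \<le> n \<Longrightarrow> F m \<le> F n"
    and inf: "filterlim F at_top sequentially"
    and ratio: "filterlim (\<lambda>q. real q / F q) at_top sequentially"
  shows "(\<lambda>B. (\<Sum>q=1..B. real_of_int (Z F q)) / real B) \<longlonglongrightarrow> euler_mascheroni"
proof -
  define E where "E T B = (\<Sum>q=1..B. real (card (divisors_below (T q) q)) - harm (num_below (T q))) / real B"
    for T :: "nat \<Rightarrow> real" and B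
  define g :: "nat \<Rightarrow> real" where "g q = 2 * harm (num_below (sqrt (F q))) - harm (num_below (F q))" for q
  have F_small: "(\<lambda>B. F B / real B) \<longlonglongrightarrow> 0"
    using tendsto_inverse_0_at_top[OF ratio] by simp
  have sqrt_F_small: "(\<lambda>B. sqrt (F B) / real B) \<longlonglongrightarrow> 0"
    using inf F_small by (rule sqrt_over_real_tendsto_0)
  have "(\<lambda>B. 2 * E (\<lambda>q. sqrt (F q)) B - E F B + (\<Sum>q=1..B. g q) / real B)
          \<longlonglongrightarrow> 2 * 0 - 0 + euler_mascheroni"
    unfolding E_def g_def
    by (intro tendsto_intros average_divisors_below_error_tendsto_0 mono F_small sqrt_F_small
          cesaro_mean_tendsto filterlim_compose[OF two_harm_sqrt_minus_harm_tendsto inf])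
       (simp add: mono)
  moreover have "2 * E (\<lambda>q. sqrt (F q)) B - E F B + (\<Sum>q=1..B. g q) / real B
      = (\<Sum>q=1..B. real_of_int (Z F q)) / real B" for B
    unfolding E_def g_def Z_eq_card_divisors_below
    by (simp add: sum.distrib sum_subtractf sum_distrib_left add_divide_distrib diff_divide_distrib)
  ultimately show ?thesis by simp
qed

end
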